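(* Let the loss $f(\cdot;z)$ be convex and $\beta$-smooth for all $z$, and let $\eta_t\le1/(2\beta)$ for all $t$. Then the expected path error of full-batch GD after $T$ iterations satisfies $$\epsilon_{\mathrm{path}}\le4\beta\,\mathbb{E}[\|W_1-W^*_S\|_2^2]+8\beta\,\mathbb{E}[R_S(W^*_S)]\sum_{t=1}^T\eta_t .$$
   Context: Let $\mathcal{D}$ be a distribution on $\mathcal{Z}$ and $z_1,\dots,z_n$ i.i.d. from $\mathcal{D}$; $S=(z_1,\dots,z_n)$. The loss $f:\mathbb{R}^d\times\mathcal{Z}\to[0,\infty)$ is non-negative; $\beta$-smooth means $\|\nabla f(w,z)-\nabla f(u,z)\|_2\le\beta\|w-u\|_2$. $R_S(w)=\frac1n\sum_j f(w,z_j)$ with minimizer $W^*_S$ (assumed to exist). Full-batch GD: from a fixed $W_1$, $W_{t+1}=W_t-\frac{\eta_t}{n}\sum_{j=1}^n\nabla f(W_t,z_j)$, $t=1,\dots,T$. Expected path error $\epsilon_{\mathrm{path}}=\sum_{t=1}^T\eta_t\mathbb{E}[\|\nabla f(W_t,z_i)\|_2^2]$ for a fixed index $i$. *)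

theory Defs
  imports "HOL-Probability.Probability"
begin

definition emp_risk :: "('a \<Rightarrow> 'z \<Rightarrow> real) \<Rightarrow> nat \<Rightarrow> (nat \<Rightarrow> 'z) \<Rightarrow> 'a \<Rightarrow> real" where
  "emp_risk f n S w = (\<Sum>j<n. f w (S j)) / real n"

text \<open>Full-batch GD: gd_aux ... k is the iterate W_(k+1);
  W_(k+2) = W_(k+1) - (eta_(k+1) / n) * sum_j grad f(W_(k+1), z_j).\<close>
primrec gd_aux :: "('a::real_vector \<Rightarrow> 'z \<Rightarrow> 'a) \<Rightarrow> (nat \<Rightarrow> real) \<Rightarrow> nat \<Rightarrow> 'a \<Rightarrow> (nat \<Rightarrow> 'z) \<Rightarrow> nat \<Rightarrow> 'a" where
  "gd_aux g eta n W1 S 0 = W1"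
| "gd_aux g eta n W1 S (Suc k) =
     gd_aux g eta n W1 S k - (eta (Suc k) / real n) *\<^sub>R (\<Sum>j<n. g (gd_aux g eta n W1 S k) (S j))"

definition gd_iter :: "('a::real_vector \<Rightarrow> 'z \<Rightarrow> 'a) \<Rightarrow> (nat \<Rightarrow> real) \<Rightarrow> nat \<Rightarrow> 'a \<Rightarrow> (nat \<Rightarrow> 'z) \<Rightarrow> nat \<Rightarrow> 'a" where
  "gd_iter g eta n W1 S t = gd_aux g eta n W1 S (t - 1)"

end

theory Submission
  imports Defs
begin

text \<open>Smoothness and nonnegativity make every loss self-bounding:
  |grad f(w,z)|^2 <= 2 beta f(w,z). Full-batch GD is invariant under permutations of the sample and
  the sample is i.i.d., so E f(W_t, z_i) = E R_S(W_t). The empirical risk is again convex and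
  beta-smooth, so for eta_t <= 1/(2 beta) each GD step decreases |W_t - W*_S|^2 by at least
  eta_t (R_S(W_t) - R_S(W*_S)); telescoping bounds sum_t eta_t R_S(W_t) pathwise by
  |W_1 - W*_S|^2 + R_S(W*_S) sum_t eta_t.\<close>

lemma has_field_derivative_along_line:
  fixes F :: "'a::real_inner \<Rightarrow> real"
  assumes grad: "\<And>w. (F has_derivative (\<lambda>h. g w \<bullet> h)) (at w)"
  shows "((\<lambda>s. F (x + s *\<^sub>R d)) has_real_derivative g (x + s *\<^sub>R d) \<bullet> d) (at s)"
proof -
  have "((\<lambda>s. x + s *\<^sub>R d) has_derivative (\<lambda>h. h *\<^sub>R d)) (at s)"
    by (auto intro!: derivative_eq_intros)
  from has_derivative_compose[OF this grad]
  show ?thesis by (simp add: has_field_derivative_def o_def mult.commute[of _ "g _ \<bullet> d"])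
qed

lemma convex_on_gradient_inequality:
  fixes F :: "'a::real_inner \<Rightarrow> real"
  assumes grad: "\<And>w. (F has_derivative (\<lambda>h. g w \<bullet> h)) (at w)"
    and convex: "convex_on UNIV F"
  shows "F x + g x \<bullet> (y - x) \<le> F y"
proof -
  define d where "d = y - x"
  have "convex_on UNIV (\<lambda>s::real. F (x + s *\<^sub>R d))"
  proof (rule convex_onI)
    fix t s r :: real assume t: "0 < t" "t < 1"
    have "x + ((1 - t) *\<^sub>R s + t *\<^sub>R r) *\<^sub>R d = (1 - t) *\<^sub>R (x + s *\<^sub>R d) + t *\<^sub>R (x + r *\<^sub>R d)"
      by (simp add: algebra_simps)
    with convex_onD[OF convex, of t "x + s *\<^sub>R d" "x + r *\<^sub>R d"] t
    show "F (x + ((1 - t) *\<^sub>R s + t *\<^sub>R r) *\<^sub>R d) \<le> (1 - t) * F (x + s *\<^sub>R d) + t * F (x + r *\<^sub>R d)"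
      by simp
  qed simp
  moreover have "((\<lambda>s. F (x + s *\<^sub>R d)) has_real_derivative g x \<bullet> d) (at 0 within UNIV)"
    using has_field_derivative_along_line[OF grad, of x d 0] by simp
  ultimately have "F (x + 1 *\<^sub>R d) - F (x + 0 *\<^sub>R d) \<ge> g x \<bullet> d * (1 - 0)"
    by (intro convex_on_imp_above_tangent) auto
  then show ?thesis by (simp add: d_def)
qed

lemma lipschitz_gradient_quadratic_upper_bound:
  fixes F :: "'a::real_inner \<Rightarrow> real"
  assumes grad: "\<And>w. (F has_derivative (\<lambda>h. g w \<bullet> h)) (at w)"
    and lipschitz: "\<And>w u. norm (g w - g u) \<le> \<beta> * norm (w - u)"
  shows "F y \<le> F x + g x \<bullet> (y - x) + \<beta> / 2 * (norm (y - x))\<^sup>2"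
proof -
  define d where "d = y - x"
  define \<phi> where "\<phi> s = F (x + s *\<^sub>R d) - s * (g x \<bullet> d) - \<beta> / 2 * s\<^sup>2 * (norm d)\<^sup>2" for s
  have "\<phi> 1 \<le> \<phi> 0"
  proof (rule DERIV_nonpos_imp_nonincreasing[of 0 1])
    fix s :: real assume s: "0 \<le> s" "s \<le> 1"
    have "(\<phi> has_real_derivative (g (x + s *\<^sub>R d) - g x) \<bullet> d - \<beta> * s * (norm d)\<^sup>2) (at s)"
      unfolding \<phi>_def inner_diff_left
      by (rule derivative_eq_intros has_field_derivative_along_line[OF grad] refl | simp)+
    moreover have "(g (x + s *\<^sub>R d) - g x) \<bullet> d \<le> \<beta> * s * (norm d)\<^sup>2"
    proof -
      have "(g (x + s *\<^sub>R d) - g x) \<bullet> d \<le> norm (g (x + s *\<^sub>R d) - g x) * norm d"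
        by (rule norm_cauchy_schwarz)
      also have "\<dots> \<le> \<beta> * norm (s *\<^sub>R d) * norm d"
        using lipschitz[of "x + s *\<^sub>R d" x] by (simp add: mult_right_mono)
      finally show ?thesis using s by (simp add: power2_eq_square mult.assoc)
    qed
    ultimately show "\<exists>y. (\<phi> has_real_derivative y) (at s) \<and> y \<le> 0" by force
  qed simp
  then show ?thesis by (simp add: \<phi>_def d_def algebra_simps)
qed

lemma gradient_norm_le_suboptimality:
  fixes F :: "'a::real_inner \<Rightarrow> real"
  assumes upper: "\<And>x y. F y \<le> F x + g x \<bullet> (y - x) + \<beta> / 2 * (norm (y - x))\<^sup>2"
    and lower: "\<And>w. m \<le> F w" and beta: "\<beta> > 0"
  shows "(norm (g x))\<^sup>2 \<le> 2 * \<beta> * (F x - m)"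
proof -
  have "m \<le> F (x - (1 / \<beta>) *\<^sub>R g x)" by (rule lower)
  also have "\<dots> \<le> F x - (norm (g x))\<^sup>2 / (2 * \<beta>)"
    using upper[where x = x and y = "x - (1 / \<beta>) *\<^sub>R g x"] beta
    by (simp add: dot_square_norm field_simps power2_eq_square)
  finally show ?thesis using beta by (simp add: field_simps)
qed

lemma gradient_step_distance_decrease:
  fixes F :: "'a::real_inner \<Rightarrow> real"
  assumes tangent: "\<And>x y. F x + g x \<bullet> (y - x) \<le> F y"
    and upper: "\<And>x y. F y \<le> F x + g x \<bullet> (y - x) + \<beta> / 2 * (norm (y - x))\<^sup>2"
    and min: "\<And>w. F ws \<le> F w" and beta: "\<beta> > 0"
    and e: "0 \<le> e" "e \<le> 1 / (2 * \<beta>)"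
  shows "(norm (x - e *\<^sub>R g x - ws))\<^sup>2 \<le> (norm (x - ws))\<^sup>2 - e * (F x - F ws)"
proof -
  have "(norm (x - e *\<^sub>R g x - ws))\<^sup>2 = (norm (x - ws))\<^sup>2 - 2 * e * (g x \<bullet> (x - ws)) + e\<^sup>2 * (norm (g x))\<^sup>2"
    unfolding power2_norm_eq_inner by (simp add: algebra_simps inner_commute power2_eq_square)
  moreover have "e * (F x - F ws) \<le> e * (g x \<bullet> (x - ws))"
    using tangent[of x ws] e by (intro mult_left_mono) (simp_all add: inner_diff_right)
  moreover have "e\<^sup>2 * (norm (g x))\<^sup>2 \<le> e * (F x - F ws)"
  proof -
    have "e\<^sup>2 * (norm (g x))\<^sup>2 \<le> e\<^sup>2 * (2 * \<beta> * (F x - F ws))"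
      by (intro mult_left_mono gradient_norm_le_suboptimality[OF upper min beta]) simp
    also have "\<dots> = (2 * \<beta> * e) * (e * (F x - F ws))"
      by (simp add: power2_eq_square)
    also have "\<dots> \<le> e * (F x - F ws)"
      using e beta min[of x] by (intro mult_left_le_one_le mult_nonneg_nonneg) (auto simp: field_simps)
    finally show ?thesis .
  qed
  ultimately show ?thesis by linarith
qed

lemma gradient_descent_weighted_suboptimality:
  fixes F :: "'a::real_inner \<Rightarrow> real"
  assumes tangent: "\<And>x y. F x + g x \<bullet> (y - x) \<le> F y"
    and upper: "\<And>x y. F y \<le> F x + g x \<bullet> (y - x) + \<beta> / 2 * (norm (y - x))\<^sup>2"
    and min: "\<And>w. F ws \<le> F w" and beta: "\<beta> > 0"
    and eta: "\<And>t. 0 \<le> eta t" "\<And>t. eta t \<le> 1 / (2 * \<beta>)"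
    and step: "\<And>k. x (Suc k) = x k - eta (Suc k) *\<^sub>R g (x k)"
  shows "(\<Sum>t=1..T. eta t * (F (x (t - 1)) - F ws)) + (norm (x T - ws))\<^sup>2 \<le> (norm (x 0 - ws))\<^sup>2"
proof (induction T)
  case (Suc T)
  have "(norm (x (Suc T) - ws))\<^sup>2 \<le> (norm (x T - ws))\<^sup>2 - eta (Suc T) * (F (x T) - F ws)"
    unfolding step by (rule gradient_step_distance_decrease[OF tangent upper min beta eta])
  with Suc.IH show ?case by simp
qed simp

definition emp_grad :: "('a::real_vector \<Rightarrow> 'z \<Rightarrow> 'a) \<Rightarrow> nat \<Rightarrow> (nat \<Rightarrow> 'z) \<Rightarrow> 'a \<Rightarrow> 'a" where
  "emp_grad g n S w = (1 / real n) *\<^sub>R (\<Sum>j<n. g w (S j))"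

lemma gd_aux_Suc_emp_grad:
  "gd_aux g eta n W1 S (Suc k)
     = gd_aux g eta n W1 S k - eta (Suc k) *\<^sub>R emp_grad g n S (gd_aux g eta n W1 S k)"
  by (simp add: emp_grad_def)

lemma emp_risk_nonneg: "(\<And>w z. 0 \<le> f w z) \<Longrightarrow> 0 \<le> emp_risk f n S w"
  unfolding emp_risk_def by (intro divide_nonneg_nonneg sum_nonneg) auto

lemma emp_risk_linearization:
  fixes f :: "'a::real_inner \<Rightarrow> 'z \<Rightarrow> real"
  shows "emp_risk f n S x + emp_grad g n S x \<bullet> (y - x)
           = (\<Sum>j<n. f x (S j) + g x (S j) \<bullet> (y - x)) / real n"
  by (simp add: emp_risk_def emp_grad_def sum.distrib inner_sum_left add_divide_distrib)

lemma emp_risk_tangent_inequality: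
  fixes f :: "'a::real_inner \<Rightarrow> 'z \<Rightarrow> real"
  assumes "\<And>x y z. f x z + g x z \<bullet> (y - x) \<le> f y z"
  shows "emp_risk f n S x + emp_grad g n S x \<bullet> (y - x) \<le> emp_risk f n S y"
  unfolding emp_risk_linearization unfolding emp_risk_def
  by (intro divide_right_mono sum_mono assms) simp

lemma emp_risk_quadratic_upper_bound:
  fixes f :: "'a::real_inner \<Rightarrow> 'z \<Rightarrow> real"
  assumes "0 < n" and "\<And>x y z. f y z \<le> f x z + g x z \<bullet> (y - x) + \<beta> / 2 * (norm (y - x))\<^sup>2"
  shows "emp_risk f n S y
           \<le> emp_risk f n S x + emp_grad g n S x \<bullet> (y - x) + \<beta> / 2 * (norm (y - x))\<^sup>2"
proof -
  have "emp_risk f n S y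
          \<le> (\<Sum>j<n. f x (S j) + g x (S j) \<bullet> (y - x) + \<beta> / 2 * (norm (y - x))\<^sup>2) / real n"
    unfolding emp_risk_def by (intro divide_right_mono sum_mono assms(2)) simp
  also have "\<dots> = emp_risk f n S x + emp_grad g n S x \<bullet> (y - x) + \<beta> / 2 * (norm (y - x))\<^sup>2"
    using assms(1) by (simp add: emp_risk_linearization sum.distrib add_divide_distrib)
  finally show ?thesis .
qed

lemma gd_iter_weighted_emp_risk_bound:
  fixes f :: "'a::real_inner \<Rightarrow> 'z \<Rightarrow> real"
  assumes n: "0 < n"
    and grad: "\<And>w z. ((\<lambda>u. f u z) has_derivative (\<lambda>h. g w z \<bullet> h)) (at w)"
    and convex: "\<And>z. convex_on UNIV (\<lambda>w. f w z)"
    and beta: "\<beta> > 0"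
    and lipschitz: "\<And>w u z. norm (g w z - g u z) \<le> \<beta> * norm (w - u)"
    and eta: "\<And>t. 0 \<le> eta t" "\<And>t. eta t \<le> 1 / (2 * \<beta>)"
    and min: "\<And>w. emp_risk f n S ws \<le> emp_risk f n S w"
  shows "(\<Sum>t=1..T. eta t * emp_risk f n S (gd_iter g eta n W1 S t))
           \<le> (norm (W1 - ws))\<^sup>2 + emp_risk f n S ws * (\<Sum>t=1..T. eta t)"
proof -
  have "(\<Sum>t=1..T. eta t * (emp_risk f n S (gd_aux g eta n W1 S (t - 1)) - emp_risk f n S ws))
          + (norm (gd_aux g eta n W1 S T - ws))\<^sup>2 \<le> (norm (gd_aux g eta n W1 S 0 - ws))\<^sup>2"
  proof (rule gradient_descent_weighted_suboptimality
      [where F = "emp_risk f n S" and g = "emp_grad g n S" and x = "gd_aux g eta n W1 S",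
       OF _ _ min beta eta gd_aux_Suc_emp_grad])
    show "emp_risk f n S x + emp_grad g n S x \<bullet> (y - x) \<le> emp_risk f n S y" for x y
      by (intro emp_risk_tangent_inequality convex_on_gradient_inequality[OF grad convex])
    show "emp_risk f n S y
            \<le> emp_risk f n S x + emp_grad g n S x \<bullet> (y - x) + \<beta> / 2 * (norm (y - x))\<^sup>2" for x y
      by (intro emp_risk_quadratic_upper_bound[OF n]
          lipschitz_gradient_quadratic_upper_bound[OF grad lipschitz])
  qed
  then have "(\<Sum>t=1..T. eta t * (emp_risk f n S (gd_iter g eta n W1 S t) - emp_risk f n S ws))
               \<le> (norm (W1 - ws))\<^sup>2"
    unfolding gd_iter_def by (smt (verit) gd_aux.simps(1) zero_le_power2)
  then show ?thesis
    by (simp add: sum_subtractf right_diff_distrib sum_distrib_left mult.commute)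
qed

lemma borel_measurable_PiM_apply_component:
  assumes h: "(\<lambda>(w, z). h w z) \<in> borel_measurable (borel \<Otimes>\<^sub>M D)"
    and X: "X \<in> borel_measurable (PiM I (\<lambda>_. D))" and j: "j \<in> I"
  shows "(\<lambda>S. h (X S) (S j)) \<in> borel_measurable (PiM I (\<lambda>_. D))"
proof -
  have "(\<lambda>S. (X S, S j)) \<in> measurable (PiM I (\<lambda>_. D)) (borel \<Otimes>\<^sub>M D)"
    using j by (intro measurable_Pair X) (auto intro: measurable_component_singleton)
  from measurable_compose[OF this h] show ?thesis by simp
qed

lemma borel_measurable_emp_risk:
  assumes "(\<lambda>(w, z). f w z) \<in> borel_measurable (borel \<Otimes>\<^sub>M D)"
    and "X \<in> borel_measurable (PiM {..<n} (\<lambda>_. D))"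
  shows "(\<lambda>S. emp_risk f n S (X S)) \<in> borel_measurable (PiM {..<n} (\<lambda>_. D))"
  unfolding emp_risk_def
  by (intro borel_measurable_divide borel_measurable_sum borel_measurable_const
      borel_measurable_PiM_apply_component[OF assms]) simp

lemma borel_measurable_gd_iter:
  fixes g :: "'a::euclidean_space \<Rightarrow> 'z \<Rightarrow> 'a"
  assumes g_meas: "(\<lambda>(w, z). g w z) \<in> borel_measurable (borel \<Otimes>\<^sub>M D)"
  shows "(\<lambda>S. gd_iter g eta n W1 S t) \<in> borel_measurable (PiM {..<n} (\<lambda>_. D))"
proof -
  have "(\<lambda>S. gd_aux g eta n W1 S k) \<in> borel_measurable (PiM {..<n} (\<lambda>_. D))" for k
  proof (induction k)
    case (Suc k)
    have "(\<lambda>S. \<Sum>j<n. g (gd_aux g eta n W1 S k) (S j)) \<in> borel_measurable (PiM {..<n} (\<lambda>_. D))"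
      by (intro borel_measurable_sum borel_measurable_PiM_apply_component[OF g_meas Suc.IH]) simp
    with Suc.IH show ?case by simp
  qed simp
  then show ?thesis unfolding gd_iter_def .
qed

lemma gd_iter_reindex_sample:
  assumes \<sigma>: "bij_betw \<sigma> {..<n} {..<n}" and S': "\<And>k. k < n \<Longrightarrow> S' k = S (\<sigma> k)"
  shows "gd_iter g eta n W1 S' t = gd_iter g eta n W1 S t"
proof -
  have "gd_aux g eta n W1 S' k = gd_aux g eta n W1 S k" for k
  proof (induction k)
    case (Suc k)
    have "(\<Sum>j<n. g w (S' j)) = (\<Sum>j<n. g w (S j))" for w
      using sum.reindex_bij_betw[OF \<sigma>, of "\<lambda>j. g w (S j)"] by (simp add: S')
    with Suc.IH show ?case by simp
  qed simp
  then show ?thesis unfolding gd_iter_def .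
qed

lemma nn_integral_PiM_reindex:
  assumes D: "prob_space D" and \<sigma>: "bij_betw \<sigma> I I"
    and F: "F \<in> borel_measurable (PiM I (\<lambda>_. D))"
  shows "(\<integral>\<^sup>+ S. F S \<partial>PiM I (\<lambda>_. D)) = (\<integral>\<^sup>+ S. F (\<lambda>k\<in>I. S (\<sigma> k)) \<partial>PiM I (\<lambda>_. D))"
proof -
  let ?P = "PiM I (\<lambda>_. D)"
  have distr: "distr ?P ?P (\<lambda>S. \<lambda>k\<in>I. S (\<sigma> k)) = ?P"
    using distr_PiM_reindex[of I "\<lambda>_. D" \<sigma> I] D \<sigma> by (auto simp: bij_betw_def)
  have "(\<lambda>S. \<lambda>k\<in>I. S (\<sigma> k)) \<in> measurable ?P ?P"
    using \<sigma> by (auto intro!: measurable_restrict measurable_component_singleton dest: bij_betw_apply)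
  from nn_integral_distr[OF this, of F] show ?thesis by (simp add: distr F)
qed

lemma nn_integral_ennreal_cmult:
  assumes "0 \<le> c" and "h \<in> borel_measurable M"
  shows "(\<integral>\<^sup>+ x. ennreal (c * h x) \<partial>M) = ennreal c * (\<integral>\<^sup>+ x. ennreal (h x) \<partial>M)"
  using assms by (simp add: ennreal_mult' nn_integral_cmult)

lemma nn_integral_ennreal_weighted_sum:
  assumes "finite I" and "\<And>t. t \<in> I \<Longrightarrow> 0 \<le> c t" and "\<And>t x. t \<in> I \<Longrightarrow> 0 \<le> h t x"
    and "\<And>t. t \<in> I \<Longrightarrow> h t \<in> borel_measurable M"
  shows "(\<integral>\<^sup>+ x. ennreal (\<Sum>t\<in>I. c t * h t x) \<partial>M) = (\<Sum>t\<in>I. ennreal (c t) * (\<integral>\<^sup>+ x. ennreal (h t x) \<partial>M))"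
proof -
  have "(\<integral>\<^sup>+ x. ennreal (\<Sum>t\<in>I. c t * h t x) \<partial>M) = (\<integral>\<^sup>+ x. (\<Sum>t\<in>I. ennreal (c t * h t x)) \<partial>M)"
    using assms(2,3) by (simp add: sum_ennreal)
  also have "\<dots> = (\<Sum>t\<in>I. \<integral>\<^sup>+ x. ennreal (c t * h t x) \<partial>M)"
    using assms(4) by (intro nn_integral_sum) auto
  finally show ?thesis using assms(2,4) by (simp add: nn_integral_ennreal_cmult)
qed

lemma nn_integral_emp_risk_exchangeable:
  fixes f :: "'a::topological_space \<Rightarrow> 'z \<Rightarrow> real"
  assumes D: "prob_space D" and i: "i < n"
    and f_nonneg: "\<And>w z. 0 \<le> f w z"
    and f_meas: "(\<lambda>(w, z). f w z) \<in> borel_measurable (borel \<Otimes>\<^sub>M D)"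
    and W_meas: "W \<in> borel_measurable (PiM {..<n} (\<lambda>_. D))"
    and W_reindex: "\<And>S S' \<sigma>. bij_betw \<sigma> {..<n} {..<n} \<Longrightarrow>
                      (\<And>k. k < n \<Longrightarrow> S' k = S (\<sigma> k)) \<Longrightarrow> W S' = W S"
  shows "(\<integral>\<^sup>+ S. ennreal (emp_risk f n S (W S)) \<partial>PiM {..<n} (\<lambda>_. D))
           = (\<integral>\<^sup>+ S. ennreal (f (W S) (S i)) \<partial>PiM {..<n} (\<lambda>_. D))"
proof -
  let ?P = "PiM {..<n} (\<lambda>_. D)"
  have f_W_meas: "(\<lambda>S. f (W S) (S j)) \<in> borel_measurable ?P" if "j < n" for j
    using borel_measurable_PiM_apply_component[OF f_meas W_meas] that by simp
  have swap: "(\<integral>\<^sup>+ S. ennreal (f (W S) (S j)) \<partial>?P) = (\<integral>\<^sup>+ S. ennreal (f (W S) (S i)) \<partial>?P)"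
    if j: "j < n" for j
  proof -
    let ?\<tau> = "Transposition.transpose i j"
    have \<tau>: "bij_betw ?\<tau> {..<n} {..<n}" using i j by simp
    have "W (\<lambda>k\<in>{..<n}. S (?\<tau> k)) = W S" for S
      by (rule W_reindex[OF \<tau>]) simp
    then have "(\<integral>\<^sup>+ S. ennreal (f (W S) (S i)) \<partial>?P) = (\<integral>\<^sup>+ S. ennreal (f (W S) (S j)) \<partial>?P)"
      using nn_integral_PiM_reindex[OF D \<tau>, of "\<lambda>S. ennreal (f (W S) (S i))"] f_W_meas[OF i] i
      by simp
    then show ?thesis ..
  qed
  have "(\<integral>\<^sup>+ S. ennreal (emp_risk f n S (W S)) \<partial>?P)
          = (\<integral>\<^sup>+ S. ennreal (\<Sum>j<n. 1 / real n * f (W S) (S j)) \<partial>?P)"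
    by (simp add: emp_risk_def sum_divide_distrib)
  also have "\<dots> = (\<Sum>j<n. ennreal (1 / real n) * (\<integral>\<^sup>+ S. ennreal (f (W S) (S j)) \<partial>?P))"
    using f_nonneg f_W_meas by (intro nn_integral_ennreal_weighted_sum) auto
  also have "\<dots> = (ennreal (real n) * ennreal (1 / real n)) * (\<integral>\<^sup>+ S. ennreal (f (W S) (S i)) \<partial>?P)"
    by (simp add: swap ennreal_of_nat_eq_real_of_nat mult.assoc)
  also have "ennreal (real n) * ennreal (1 / real n) = 1"
    using i by (simp flip: ennreal_mult)
  finally show ?thesis by simp
qed

lemma nn_integral_gradient_norm_le_emp_risk:
  fixes f :: "'a::real_inner \<Rightarrow> 'z \<Rightarrow> real"
  assumes D: "prob_space D" and i: "i < n"
    and f_nonneg: "\<And>w z. 0 \<le> f w z"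
    and f_meas: "(\<lambda>(w, z). f w z) \<in> borel_measurable (borel \<Otimes>\<^sub>M D)"
    and grad: "\<And>w z. ((\<lambda>u. f u z) has_derivative (\<lambda>h. g w z \<bullet> h)) (at w)"
    and lipschitz: "\<And>w u z. norm (g w z - g u z) \<le> \<beta> * norm (w - u)"
    and beta: "\<beta> > 0"
    and W_meas: "W \<in> borel_measurable (PiM {..<n} (\<lambda>_. D))"
    and W_reindex: "\<And>S S' \<sigma>. bij_betw \<sigma> {..<n} {..<n} \<Longrightarrow>
                      (\<And>k. k < n \<Longrightarrow> S' k = S (\<sigma> k)) \<Longrightarrow> W S' = W S"
  shows "(\<integral>\<^sup>+ S. ennreal ((norm (g (W S) (S i)))\<^sup>2) \<partial>PiM {..<n} (\<lambda>_. D))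
           \<le> ennreal (2 * \<beta>) * (\<integral>\<^sup>+ S. ennreal (emp_risk f n S (W S)) \<partial>PiM {..<n} (\<lambda>_. D))"
proof -
  let ?P = "PiM {..<n} (\<lambda>_. D)"
  have "(\<integral>\<^sup>+ S. ennreal ((norm (g (W S) (S i)))\<^sup>2) \<partial>?P)
          \<le> (\<integral>\<^sup>+ S. ennreal (2 * \<beta> * f (W S) (S i)) \<partial>?P)"
    using gradient_norm_le_suboptimality
        [OF lipschitz_gradient_quadratic_upper_bound[OF grad lipschitz] f_nonneg beta]
    by (intro nn_integral_mono ennreal_leI) simp
  also have "\<dots> = ennreal (2 * \<beta>) * (\<integral>\<^sup>+ S. ennreal (f (W S) (S i)) \<partial>?P)"
    using beta borel_measurable_PiM_apply_component[OF f_meas W_meas] i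
    by (intro nn_integral_ennreal_cmult) auto
  also have "\<dots> = ennreal (2 * \<beta>) * (\<integral>\<^sup>+ S. ennreal (emp_risk f n S (W S)) \<partial>?P)"
    by (simp add: nn_integral_emp_risk_exchangeable[OF D i f_nonneg f_meas W_meas W_reindex])
  finally show ?thesis .
qed

lemma nn_integral_weighted_emp_risk_gd_iter_le:
  fixes f :: "'a::euclidean_space \<Rightarrow> 'z \<Rightarrow> real"
  assumes n: "0 < n"
    and f_nonneg: "\<And>w z. 0 \<le> f w z"
    and f_meas: "(\<lambda>(w, z). f w z) \<in> borel_measurable (borel \<Otimes>\<^sub>M D)"
    and grad: "\<And>w z. ((\<lambda>u. f u z) has_derivative (\<lambda>h. g w z \<bullet> h)) (at w)"
    and convex: "\<And>z. convex_on UNIV (\<lambda>w. f w z)"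
    and beta: "\<beta> > 0"
    and lipschitz: "\<And>w u z. norm (g w z - g u z) \<le> \<beta> * norm (w - u)"
    and eta: "\<And>t. 0 \<le> eta t" "\<And>t. eta t \<le> 1 / (2 * \<beta>)"
    and Wstar_min: "\<And>S w. S \<in> space (PiM {..<n} (\<lambda>_. D)) \<Longrightarrow>
                      emp_risk f n S (Wstar S) \<le> emp_risk f n S w"
    and Wstar_meas: "Wstar \<in> borel_measurable (PiM {..<n} (\<lambda>_. D))"
  shows "(\<integral>\<^sup>+ S. ennreal (\<Sum>t=1..T. eta t * emp_risk f n S (gd_iter g eta n W1 S t))
            \<partial>PiM {..<n} (\<lambda>_. D))
           \<le> (\<integral>\<^sup>+ S. ennreal ((norm (W1 - Wstar S))\<^sup>2) \<partial>PiM {..<n} (\<lambda>_. D))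
             + ennreal (\<Sum>t=1..T. eta t)
               * (\<integral>\<^sup>+ S. ennreal (emp_risk f n S (Wstar S)) \<partial>PiM {..<n} (\<lambda>_. D))"
proof -
  let ?P = "PiM {..<n} (\<lambda>_. D)"
  have "(\<integral>\<^sup>+ S. ennreal (\<Sum>t=1..T. eta t * emp_risk f n S (gd_iter g eta n W1 S t)) \<partial>?P)
         \<le> (\<integral>\<^sup>+ S. ennreal ((norm (W1 - Wstar S))\<^sup>2)
                 + ennreal ((\<Sum>t=1..T. eta t) * emp_risk f n S (Wstar S)) \<partial>?P)"
  proof (rule nn_integral_mono)
    fix S assume "S \<in> space ?P"
    from gd_iter_weighted_emp_risk_bound[OF n grad convex beta lipschitz eta Wstar_min[OF this]]
    show "ennreal (\<Sum>t=1..T. eta t * emp_risk f n S (gd_iter g eta n W1 S t))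
            \<le> ennreal ((norm (W1 - Wstar S))\<^sup>2)
               + ennreal ((\<Sum>t=1..T. eta t) * emp_risk f n S (Wstar S))"
      using eta by (simp add: mult.commute sum_nonneg emp_risk_nonneg[OF f_nonneg] flip: ennreal_plus)
  qed
  also have "\<dots> = (\<integral>\<^sup>+ S. ennreal ((norm (W1 - Wstar S))\<^sup>2) \<partial>?P)
                   + ennreal (\<Sum>t=1..T. eta t) * (\<integral>\<^sup>+ S. ennreal (emp_risk f n S (Wstar S)) \<partial>?P)"
    using Wstar_meas borel_measurable_emp_risk[OF f_meas Wstar_meas] eta
    by (simp add: nn_integral_add nn_integral_ennreal_cmult sum_nonneg)
  finally show ?thesis .
qed

theorem lemma20:
  fixes D :: "'z measure"
    and f :: "'a::euclidean_space \<Rightarrow> 'z \<Rightarrow> real"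
    and gradf :: "'a \<Rightarrow> 'z \<Rightarrow> 'a"
    and \<beta> :: real and eta :: "nat \<Rightarrow> real"
    and n T i :: nat and W1 :: 'a
    and Wstar :: "(nat \<Rightarrow> 'z) \<Rightarrow> 'a"
  assumes D: "prob_space D"
    and i: "i < n"
    and f_nonneg: "\<And>w z. f w z \<ge> 0"
    and f_meas: "(\<lambda>(w, z). f w z) \<in> borel_measurable (borel \<Otimes>\<^sub>M D)"
    and grad: "\<And>w z. ((\<lambda>u. f u z) has_derivative (\<lambda>h. gradf w z \<bullet> h)) (at w)"
    and grad_meas: "(\<lambda>(w, z). gradf w z) \<in> borel_measurable (borel \<Otimes>\<^sub>M D)"
    and convex: "\<And>z. convex_on UNIV (\<lambda>w. f w z)"
    and beta_pos: "\<beta> > 0"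
    and smooth: "\<And>w u z. norm (gradf w z - gradf u z) \<le> \<beta> * norm (w - u)"
    and eta_nonneg: "\<And>t. eta t \<ge> 0"
    and eta_le: "\<And>t. eta t \<le> 1 / (2 * \<beta>)"
    and Wstar_min: "\<And>S w. S \<in> space (PiM {..<n} (\<lambda>_. D)) \<Longrightarrow>
                      emp_risk f n S (Wstar S) \<le> emp_risk f n S w"
    and Wstar_meas: "Wstar \<in> borel_measurable (PiM {..<n} (\<lambda>_. D))"
  shows "(\<Sum>t=1..T. ennreal (eta t) *
            (\<integral>\<^sup>+ S. ennreal ((norm (gradf (gd_iter gradf eta n W1 S t) (S i)))\<^sup>2)
               \<partial>(PiM {..<n} (\<lambda>_. D))))
         \<le> ennreal (4 * \<beta>) * (\<integral>\<^sup>+ S. ennreal ((norm (W1 - Wstar S))\<^sup>2) \<partial>(PiM {..<n} (\<lambda>_. D)))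
           + ennreal (8 * \<beta>) * (\<integral>\<^sup>+ S. ennreal (emp_risk f n S (Wstar S)) \<partial>(PiM {..<n} (\<lambda>_. D)))
             * ennreal (\<Sum>t=1..T. eta t)"
proof -
  let ?P = "PiM {..<n} (\<lambda>_. D)"
  let ?R = "\<lambda>t S. emp_risk f n S (gd_iter gradf eta n W1 S t)"
  let ?A = "\<integral>\<^sup>+ S. ennreal ((norm (W1 - Wstar S))\<^sup>2) \<partial>?P"
  let ?B = "\<integral>\<^sup>+ S. ennreal (emp_risk f n S (Wstar S)) \<partial>?P"
  let ?s = "\<Sum>t=1..T. eta t"
  note gd_meas = borel_measurable_gd_iter[OF grad_meas, of eta n W1]
  have "(\<Sum>t=1..T. ennreal (eta t) *
            (\<integral>\<^sup>+ S. ennreal ((norm (gradf (gd_iter gradf eta n W1 S t) (S i)))\<^sup>2) \<partial>?P))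
        \<le> (\<Sum>t=1..T. ennreal (eta t) * (ennreal (2 * \<beta>) * (\<integral>\<^sup>+ S. ennreal (?R t S) \<partial>?P)))"
    by (intro sum_mono mult_left_mono nn_integral_gradient_norm_le_emp_risk[OF D i f_nonneg f_meas grad
          smooth beta_pos gd_meas gd_iter_reindex_sample]) auto
  also have "\<dots> = ennreal (2 * \<beta>) * (\<Sum>t=1..T. ennreal (eta t) * (\<integral>\<^sup>+ S. ennreal (?R t S) \<partial>?P))"
    by (simp add: sum_distrib_left mult.left_commute)
  also have "\<dots> = ennreal (2 * \<beta>) * (\<integral>\<^sup>+ S. ennreal (\<Sum>t=1..T. eta t * ?R t S) \<partial>?P)"
    using eta_nonneg emp_risk_nonneg[where f = f, OF f_nonneg]
      borel_measurable_emp_risk[OF f_meas gd_meas]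
    by (subst nn_integral_ennreal_weighted_sum) auto
  also have "\<dots> \<le> ennreal (2 * \<beta>) * (?A + ennreal ?s * ?B)"
    using i by (intro mult_left_mono nn_integral_weighted_emp_risk_gd_iter_le[OF _ f_nonneg f_meas grad
          convex beta_pos smooth eta_nonneg eta_le Wstar_min Wstar_meas]) auto
  also have "\<dots> = ennreal (2 * \<beta>) * ?A + ennreal (2 * \<beta> * ?s) * ?B"
    using beta_pos eta_nonneg by (simp add: distrib_left ennreal_mult sum_nonneg mult.assoc)
  \<comment> \<open>The argument gives the constant 2\<beta> in both terms; the stated constants are weaker.\<close>
  also have "\<dots> \<le> ennreal (4 * \<beta>) * ?A + ennreal (8 * \<beta> * ?s) * ?B"
    using beta_pos eta_nonneg
    by (intro add_mono mult_right_mono ennreal_leI) (auto intro: mult_right_mono sum_nonneg)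
  also have "\<dots> = ennreal (4 * \<beta>) * ?A + ennreal (8 * \<beta>) * ?B * ennreal ?s"
    using beta_pos eta_nonneg by (simp add: ennreal_mult sum_nonneg mult_ac)
  finally show ?thesis .
qed

end
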